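(* Suppose that $\sup_{u\in[0,1]}\|\Sigma(u)\|_2<\infty$, that $\Sigma(u)$ is positive definite for every $u$, and that $\inf_{u\in[0,1]}\Delta(u)>0$. Let $\hat\mu_1(u),\hat\mu_2(u),\hat\theta(u)$ be any estimators (depending on the sample size $n$) and put $\hat\mu(u)=(\hat\mu_1(u)+\hat\mu_2(u))/2$. If, as $n\to\infty$, $\|\hat\mu_1(u)-\mu_1(u)\|_2=o(1)$, $\|\hat\mu_2(u)-\mu_2(u)\|_2=o(1)$ and $\|\hat\theta(u)-\theta^*(u)\|_2=o(1)$, then for every $u\in[0,1]$, $$|R_n(u)-R(u)|\lesssim \|\hat\theta(u)-\theta^*(u)\|_2^2+\big|(\hat\mu(u)-\mu(u))^\top\beta^*(u)\big|^2 .$$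
   Context: Model: $U\in[0,1]$ is an exposure variable, $Y\in\{0,1\}$ a label independent of $U$ with $\mathbb P(Y=1)=\mathbb P(Y=0)=1/2$, and $X\in\mathbb R^p$ satisfies, conditionally on $U=u$, $X\sim\mathcal N(\mu_1(u),\Sigma(u))$ if $Y=1$ and $X\sim\mathcal N(\mu_2(u),\Sigma(u))$ if $Y=0$. Write $\delta(u)=\mu_1(u)-\mu_2(u)$, $\mu(u)=(\mu_1(u)+\mu_2(u))/2$, $\beta^*(u)=\Sigma(u)^{-1}\delta(u)$, $\Delta(u)=\sqrt{\delta(u)^\top\Sigma(u)^{-1}\delta(u)}$. Let $Z=\mathbb 1(Y=1)-1/2$ and let $\theta^*(u)$ be the minimizer over $\theta\in\mathbb R^p$ of $\mathbb E[(Z-\theta^\top(X-\mu(U)))^2\mid U=u]$ (a positive multiple of $\beta^*(u)$). The oracle risk is $R(u)=\Phi(-\Delta(u)/2)$, where $\Phi$ is the standard normal cdf and $\bar\Phi=1-\Phi$. The conditional misclassification risk of the rule $\mathbb 1\{(x-\hat\mu(u))^\top\hat\theta(u)\ge 0\}$ is $$R_n(u)=\tfrac12\Phi\Big(\tfrac{(\hat\mu(u)-\mu_1(u))^\top\hat\theta(u)}{\sqrt{\hat\theta(u)^\top\Sigma(u)\hat\theta(u)}}\Big)+\tfrac12\bar\Phi\Big(\tfrac{(\hat\mu(u)-\mu_2(u))^\top\hat\theta(u)}{\sqrt{\hat\theta(u)^\top\Sigma(u)\hat\theta(u)}}\Big).$$ $a\lesssim b$ means $a\le Cb$ for a constant $C$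 not depending on $n$ or $u$. *)

theory Defs
  imports "HOL-Probability.Probability"
begin

definition Phi :: "real \<Rightarrow> real" where
  "Phi x = cdf (density lborel std_normal_density) x"

definition Phibar :: "real \<Rightarrow> real" where
  "Phibar x = 1 - Phi x"

definition pos_def :: "real^'p^'p \<Rightarrow> bool" where
  "pos_def A \<longleftrightarrow> transpose A = A \<and> (\<forall>x. x \<noteq> 0 \<longrightarrow> x \<bullet> (A *v x) > 0)"

definition delta :: "(real \<Rightarrow> real^'p) \<Rightarrow> (real \<Rightarrow> real^'p) \<Rightarrow> real \<Rightarrow> real^'p" where
  "delta mu1 mu2 u = mu1 u - mu2 u"

definition mid :: "(real \<Rightarrow> real^'p) \<Rightarrow> (real \<Rightarrow> real^'p) \<Rightarrow> real \<Rightarrow> real^'p" where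
  "mid mu1 mu2 u = (1/2) *\<^sub>R (mu1 u + mu2 u)"

definition beta_star :: "(real \<Rightarrow> real^'p^'p) \<Rightarrow> (real \<Rightarrow> real^'p) \<Rightarrow> (real \<Rightarrow> real^'p) \<Rightarrow> real \<Rightarrow> real^'p" where
  "beta_star Sig mu1 mu2 u = matrix_inv (Sig u) *v delta mu1 mu2 u"

definition Delta :: "(real \<Rightarrow> real^'p^'p) \<Rightarrow> (real \<Rightarrow> real^'p) \<Rightarrow> (real \<Rightarrow> real^'p) \<Rightarrow> real \<Rightarrow> real" where
  "Delta Sig mu1 mu2 u = sqrt (delta mu1 mu2 u \<bullet> (matrix_inv (Sig u) *v delta mu1 mu2 u))"

(* Conditional least-squares loss E[(Z - theta^T (X - mu(U)))^2 | U = u] in the model: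
   Z = 1(Y=1) - 1/2, P(Y=1)=P(Y=0)=1/2, X - mu(u) | Y=1,U=u ~ N(delta/2, Sig),
   X - mu(u) | Y=0,U=u ~ N(-delta/2, Sig).  Computing the moments:
   E[Z^2] = 1/4, E[Z theta^T W] = theta^T delta / 4,
   E[(theta^T W)^2] = theta^T Sig theta + (theta^T delta)^2 / 4. *)
definition ls_loss :: "(real \<Rightarrow> real^'p^'p) \<Rightarrow> (real \<Rightarrow> real^'p) \<Rightarrow> (real \<Rightarrow> real^'p) \<Rightarrow> real \<Rightarrow> real^'p \<Rightarrow> real" where
  "ls_loss Sig mu1 mu2 u \<theta> =
     1/4 - (\<theta> \<bullet> delta mu1 mu2 u) / 2 + \<theta> \<bullet> (Sig u *v \<theta>) + (\<theta> \<bullet> delta mu1 mu2 u)^2 / 4"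

definition theta_star :: "(real \<Rightarrow> real^'p^'p) \<Rightarrow> (real \<Rightarrow> real^'p) \<Rightarrow> (real \<Rightarrow> real^'p) \<Rightarrow> real \<Rightarrow> real^'p" where
  "theta_star Sig mu1 mu2 u =
     (THE \<theta>. \<forall>\<theta>'. ls_loss Sig mu1 mu2 u \<theta> \<le> ls_loss Sig mu1 mu2 u \<theta>')"

definition oracle_risk :: "(real \<Rightarrow> real^'p^'p) \<Rightarrow> (real \<Rightarrow> real^'p) \<Rightarrow> (real \<Rightarrow> real^'p) \<Rightarrow> real \<Rightarrow> real" where
  "oracle_risk Sig mu1 mu2 u = Phi (- Delta Sig mu1 mu2 u / 2)"

(* conditional misclassification risk R_n(u) of the rule 1{(x - muhat)^T thetahat >= 0} *)
definition plugin_risk :: "(real \<Rightarrow> real^'p^'p) \<Rightarrow> (real \<Rightarrow> real^'p) \<Rightarrow> (real \<Rightarrow> real^'p) \<Rightarrow>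
     real^'p \<Rightarrow> real^'p \<Rightarrow> real \<Rightarrow> real" where
  "plugin_risk Sig mu1 mu2 muhat thetahat u =
     (let s = sqrt (thetahat \<bullet> (Sig u *v thetahat)) in
      1/2 * Phi (((muhat - mu1 u) \<bullet> thetahat) / s) + 1/2 * Phibar (((muhat - mu2 u) \<bullet> thetahat) / s))"

end

theory Submission
  imports Defs
begin

(* Let theta = thetahat(u), h = theta - theta_star and s = sqrt(theta' Sigma theta). Then
   R_n = Phi(t - d)/2 + Phi(-t - d)/2 with d = delta' theta / (2 s) and t = (muhat - mu)' theta / s,
   while R = Phi(-Delta/2). As theta_star = beta_star / (4 + Delta^2) is parallel to beta_star, the
   Cauchy-Schwarz defect of beta_star and theta in the Sigma-inner product depends on h alone and is
   quadratic in it, whence 0 <= Delta/2 - d = O(|h|^2). The map tau |-> Phi(tau - d) + Phi(-tau - d)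
   is even, so it differs from 2 Phi(-d) by O(t^2) = O(|h|^2 + ((muhat - mu)' beta_star)^2). The
   constants involve Delta only through the bounded quantity (4 + Delta^2)^2 phi(Delta/8), besides
   |Sigma| and 1/Delta, and are therefore uniform in u. *)

section \<open>The standard normal distribution\<close>

abbreviation phi :: "real \<Rightarrow> real" where "phi \<equiv> std_normal_density"

lemma abs_diff_le_derivative_bound:
  fixes f f' :: "real \<Rightarrow> real"
  assumes "\<And>z. z \<in> {a..b} \<Longrightarrow> (f has_real_derivative f' z) (at z)"
    and "\<And>z. z \<in> {a..b} \<Longrightarrow> \<bar>f' z\<bar> \<le> B"
    and "x \<in> {a..b}" "y \<in> {a..b}"
  shows "\<bar>f x - f y\<bar> \<le> B * \<bar>x - y\<bar>"
  using field_differentiable_bound[of "{a..b}" f f' B x y] assms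
  by (auto intro: has_field_derivative_at_within)

lemma Phi_diff_eq_integral:
  assumes "a \<le> x"
  shows "Phi x - Phi a = integral {a..x} phi"
proof -
  define M where "M = density lborel phi"
  interpret prob_space M unfolding M_def by (rule prob_space_normal_density) simp
  have sets_M: "sets M = sets borel" unfolding M_def by simp
  have "{..x} = {..a} \<union> {a<..x}" using assms by auto
  then have "measure M {..x} = measure M {..a} + measure M {a<..x}"
    by (metis finite_measure_Union sets_M sets_lborel atMost_borel greaterThanAtMost_borel
        ivl_disj_int_one(3))
  moreover have "measure M {a<..x} = integral {a<..x} phi"
  proof -
    have "measure M {a<..x} = integral\<^sup>L M (indicator {a<..x})"
      by (simp add: sets_M)
    also have "\<dots> = integral\<^sup>L lborel (\<lambda>t. phi t *\<^sub>R indicator {a<..x} t)"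
      unfolding M_def by (rule integral_density) auto
    also have "\<dots> = (LINT t:{a<..x}|lborel. phi t)"
      by (simp add: set_lebesgue_integral_def mult.commute)
    also have "\<dots> = integral {a<..x} phi"
      by (rule set_borel_integral_eq_integral)
        (unfold set_integrable_def, rule integrable_mult_indicator, auto)
    finally show ?thesis .
  qed
  moreover have "integral {a<..x} phi = integral {a..x} phi"
    by (rule integral_spike_set) (auto intro: negligible_subset[of "{a}"])
  ultimately show ?thesis unfolding Phi_def cdf_def M_def by simp
qed

lemma DERIV_Phi: "(Phi has_real_derivative phi x) (at x)"
proof -
  have cont: "continuous_on {x - 1..x + 1} phi"
    unfolding std_normal_density_def by (intro continuous_intros) auto
  have "((\<lambda>y. Phi (x - 1) + integral {x - 1..y} phi) has_real_derivative phi x) (at x)"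
    using integral_has_real_derivative[OF cont, of x] at_within_interior[of x "{x - 1..x + 1}"]
    by (auto intro!: derivative_eq_intros)
  then show ?thesis
  proof (rule has_field_derivative_transform_within_open[where S = "{x - 1<..}"])
    show "Phi (x - 1) + integral {x - 1..y} phi = Phi y" if "y \<in> {x - 1<..}" for y
      using Phi_diff_eq_integral[of "x - 1" y] that by simp
  qed auto
qed

lemma DERIV_std_normal_density: "(phi has_real_derivative - x * phi x) (at x)"
proof -
  define c where "c = 1 / sqrt (2 * pi)"
  have "phi = (\<lambda>x. c * exp (- x\<^sup>2 / 2))"
    by (simp add: std_normal_density_def fun_eq_iff c_def)
  then show ?thesis
    by (simp only:) (auto intro!: derivative_eq_intros)
qed

lemma std_normal_density_minus [simp]: "phi (- x) = phi x"
  by (simp add: std_normal_density_def)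

lemma std_normal_density_le_exp: "phi x \<le> exp (- x\<^sup>2 / 2)"
proof -
  have "1 \<le> sqrt (2 * pi)" using pi_gt3 by simp
  then show ?thesis
    unfolding std_normal_density_def by (simp add: divide_le_eq)
qed

lemma std_normal_density_le_1: "phi x \<le> 1"
  using std_normal_density_le_exp[of x] by (rule order_trans) simp

lemma std_normal_density_antimono:
  assumes "0 \<le> y" "y \<le> \<bar>x\<bar>"
  shows "phi x \<le> phi y"
proof -
  have "y\<^sup>2 \<le> x\<^sup>2" using assms by (metis abs_le_square_iff abs_of_nonneg)
  then show ?thesis by (simp add: std_normal_density_def divide_right_mono)
qed

lemma Phi_minus: "Phi (- x) = 1 - Phi x"
proof -
  define f where "f y = Phi y + Phi (- y)" for y
  have "DERIV f y :> 0" for y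
    using DERIV_add[OF DERIV_Phi DERIV_chain2[OF DERIV_Phi DERIV_minus[OF DERIV_ident]]]
    by (simp add: f_def[abs_def])
  then have f_const: "f = (\<lambda>_. f x)"
    by (metis DERIV_isconst_all)
  define M where "M = density lborel phi"
  interpret prob_space M unfolding M_def by (rule prob_space_normal_density) simp
  interpret finite_borel_measure M by unfold_locales (simp add: M_def)
  have "(Phi \<longlongrightarrow> 1) at_top"
    unfolding Phi_def M_def[symmetric] using cdf_lim_at_top prob_space by simp
  moreover have "((\<lambda>y. Phi (- y)) \<longlongrightarrow> 0) at_top"
    unfolding Phi_def M_def[symmetric]
    by (rule filterlim_compose[OF cdf_lim_at_bot filterlim_uminus_at_bot_at_top])
  ultimately have "(f \<longlongrightarrow> 1) at_top"
    unfolding f_def[abs_def] using tendsto_add by fastforce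
  then have "f x = 1"
    by (subst (asm) f_const) (simp add: tendsto_const_iff)
  then show ?thesis by (simp add: f_def)
qed

lemma Phibar_eq_Phi_minus: "Phibar x = Phi (- x)"
  by (simp add: Phibar_def Phi_minus)

lemma std_normal_density_decay: "(4 + D\<^sup>2)\<^sup>2 * phi (D / 8) \<le> 2 ^ 16"
proof -
  define y where "y = D\<^sup>2 / 128"
  have "0 \<le> y" by (simp add: y_def)
  have "(4 + D\<^sup>2)\<^sup>2 \<le> (2 ^ 8 * (1 + y / 2))\<^sup>2"
    by (rule power_mono) (auto simp: y_def)
  also have "\<dots> = 2 ^ 16 * (1 + y / 2)\<^sup>2"
    by (simp only: power_mult_distrib) simp
  also have "\<dots> \<le> 2 ^ 16 * (exp (y / 2))\<^sup>2"
    using \<open>0 \<le> y\<close> by (intro mult_left_mono power_mono exp_ge_add_one_self) auto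
  also have "\<dots> = 2 ^ 16 * exp y"
    by (simp flip: exp_double)
  finally have "(4 + D\<^sup>2)\<^sup>2 * phi (D / 8) \<le> 2 ^ 16 * exp y * exp (- y)"
    using std_normal_density_le_exp[of "D / 8"]
    by (intro mult_mono) (auto simp: y_def power_divide)
  then show ?thesis by (simp add: exp_minus_inverse mult.assoc)
qed

lemma std_normal_density_symmetric_diff:
  assumes "0 < d" "\<bar>\<tau>\<bar> \<le> d / 2"
  shows "\<bar>phi (d + \<tau>) - phi (d - \<tau>)\<bar> \<le> 3 * d * phi (d / 2) * \<bar>\<tau>\<bar>"
proof -
  have deriv_bound: "\<bar>- z * phi z\<bar> \<le> 3 / 2 * d * phi (d / 2)" if "z \<in> {d / 2..3 / 2 * d}" for z
  proof -
    have "z * phi z \<le> 3 / 2 * d * phi (d / 2)"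
      using that assms by (intro mult_mono std_normal_density_antimono) auto
    then show ?thesis using that assms by (simp add: abs_mult)
  qed
  have "d + \<tau> \<in> {d / 2..3 / 2 * d}" "d - \<tau> \<in> {d / 2..3 / 2 * d}"
    using assms(2) by (auto simp: abs_le_iff)
  then have "\<bar>phi (d + \<tau>) - phi (d - \<tau>)\<bar> \<le> 3 / 2 * d * phi (d / 2) * \<bar>(d + \<tau>) - (d - \<tau>)\<bar>"
    by (intro abs_diff_le_derivative_bound[OF DERIV_std_normal_density deriv_bound])
  then show ?thesis by (simp add: abs_mult mult_ac)
qed

text \<open>The bound is quadratic in \<open>t\<close> because \<open>\<tau> \<mapsto> \<Phi>(\<tau> - d) + \<Phi>(-\<tau> - d)\<close> is even.\<close>
lemma Phi_symmetric_shift_bound: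
  assumes "0 < d" "\<bar>t\<bar> \<le> d / 2"
  shows "\<bar>Phi (t - d) + Phi (- t - d) - 2 * Phi (- d)\<bar> \<le> 3 * d * phi (d / 2) * t\<^sup>2"
proof -
  define G where "G \<tau> = Phi (\<tau> - d) + Phi (- \<tau> - d)" for \<tau>
  have "(G has_real_derivative phi (\<tau> - d) - phi (- \<tau> - d)) (at \<tau>)" for \<tau>
    unfolding G_def
    by (auto intro!: derivative_eq_intros DERIV_chain2[OF DERIV_Phi])
  moreover have "\<bar>phi (\<tau> - d) - phi (- \<tau> - d)\<bar> \<le> 3 * d * phi (d / 2) * \<bar>t\<bar>"
    if "\<tau> \<in> {- \<bar>t\<bar>..\<bar>t\<bar>}" for \<tau>
  proof -
    have "phi (\<tau> - d) = phi (d - \<tau>)" "phi (- \<tau> - d) = phi (d + \<tau>)"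
      using std_normal_density_minus[of "d - \<tau>"] std_normal_density_minus[of "d + \<tau>"]
      by (simp_all add: algebra_simps)
    moreover have "\<bar>phi (d + \<tau>) - phi (d - \<tau>)\<bar> \<le> 3 * d * phi (d / 2) * \<bar>\<tau>\<bar>"
      using that assms by (intro std_normal_density_symmetric_diff) auto
    moreover have "3 * d * phi (d / 2) * \<bar>\<tau>\<bar> \<le> 3 * d * phi (d / 2) * \<bar>t\<bar>"
      using that assms by (intro mult_left_mono) auto
    ultimately show ?thesis by (simp add: abs_minus_commute)
  qed
  ultimately have "\<bar>G t - G 0\<bar> \<le> 3 * d * phi (d / 2) * \<bar>t\<bar> * \<bar>t - 0\<bar>"
    by (intro abs_diff_le_derivative_bound[of "- \<bar>t\<bar>" "\<bar>t\<bar>"]) auto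
  then show ?thesis by (simp add: G_def power2_eq_square abs_mult_self mult.assoc)
qed

lemma Phi_risk_deviation_bound:
  assumes "0 < D" "D / 4 \<le> d" "d \<le> D / 2" "\<bar>t\<bar> \<le> D / 8"
  shows "\<bar>1/2 * Phi (t - d) + 1/2 * Phi (- t - d) - Phi (- D / 2)\<bar>
    \<le> phi (D / 8) * (3/4 * D * t\<^sup>2 + (D / 2 - d))"
proof -
  have "\<bar>Phi (t - d) + Phi (- t - d) - 2 * Phi (- d)\<bar> \<le> 3 * d * phi (d / 2) * t\<^sup>2"
    using assms by (intro Phi_symmetric_shift_bound) auto
  also have "\<dots> \<le> 3 * (D / 2) * phi (D / 8) * t\<^sup>2"
    using assms by (intro mult_right_mono mult_mono std_normal_density_antimono) auto
  finally have even_part: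
    "\<bar>Phi (t - d) + Phi (- t - d) - 2 * Phi (- d)\<bar> \<le> 2 * (phi (D / 8) * (3/4 * D * t\<^sup>2))"
    by (simp add: mult_ac)
  have "\<bar>phi z\<bar> \<le> phi (D / 8)" if "z \<in> {- D / 2..- d}" for z
    using that assms std_normal_density_antimono[of "D / 8" z] by auto
  then have "\<bar>Phi (- d) - Phi (- D / 2)\<bar> \<le> phi (D / 8) * \<bar>- d - - D / 2\<bar>"
    using assms by (intro abs_diff_le_derivative_bound[OF DERIV_Phi]) auto
  then have shift: "\<bar>Phi (- d) - Phi (- D / 2)\<bar> \<le> phi (D / 8) * (D / 2 - d)"
    using assms by simp
  have "1/2 * Phi (t - d) + 1/2 * Phi (- t - d) - Phi (- D / 2)
      = 1/2 * (Phi (t - d) + Phi (- t - d) - 2 * Phi (- d)) + (Phi (- d) - Phi (- D / 2))"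
    by (simp add: field_simps)
  then have "\<bar>1/2 * Phi (t - d) + 1/2 * Phi (- t - d) - Phi (- D / 2)\<bar>
      \<le> 1/2 * \<bar>Phi (t - d) + Phi (- t - d) - 2 * Phi (- d)\<bar> + \<bar>Phi (- d) - Phi (- D / 2)\<bar>"
    by (simp add: abs_triangle_ineq[THEN order_trans] abs_mult)
  then show ?thesis
    using even_part shift unfolding distrib_left by linarith
qed

section \<open>Positive definite matrices\<close>

lemma pos_def_inner_commute:
  fixes S :: "real^'n^'n"
  assumes "pos_def S"
  shows "x \<bullet> (S *v y) = y \<bullet> (S *v x)"
proof -
  have "x \<bullet> (S *v y) = (transpose S *v x) \<bullet> y"
    by (simp add: dot_lmul_matrix)
  with assms show ?thesis
    by (simp add: pos_def_def inner_commute)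
qed

lemma pos_def_nonneg:
  fixes S :: "real^'n^'n"
  assumes "pos_def S"
  shows "0 \<le> x \<bullet> (S *v x)"
  using assms unfolding pos_def_def by (cases "x = 0") (auto intro: less_imp_le)

lemma pos_def_eq_0_iff:
  fixes S :: "real^'n^'n"
  assumes "pos_def S"
  shows "x \<bullet> (S *v x) = 0 \<longleftrightarrow> x = 0"
  using assms unfolding pos_def_def by force

lemma pos_def_right_inverse:
  fixes S :: "real^'n^'n"
  assumes "pos_def S"
  shows "S *v (matrix_inv S *v v) = v"
proof -
  have "\<forall>x. S *v x = 0 \<longrightarrow> x = 0"
    using pos_def_eq_0_iff[OF assms] by fastforce
  then have "invertible S"
    by (simp add: invertible_left_inverse matrix_left_invertible_ker)
  then have "S ** matrix_inv S = mat 1"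
    unfolding invertible_def matrix_inv_def by (rule someI_ex[THEN conjunct1])
  then show ?thesis
    by (simp add: matrix_vector_mul_assoc)
qed

lemma pos_def_quadratic_form_add:
  fixes S :: "real^'n^'n"
  assumes "pos_def S"
  shows "(x + y) \<bullet> (S *v (x + y)) = x \<bullet> (S *v x) + 2 * (x \<bullet> (S *v y)) + y \<bullet> (S *v y)"
  using pos_def_inner_commute[OF assms, of y x]
  by (simp add: matrix_vector_right_distrib inner_add_left inner_add_right)

lemma pos_def_Cauchy_Schwarz:
  fixes S :: "real^'n^'n"
  assumes "pos_def S"
  shows "(x \<bullet> (S *v y))\<^sup>2 \<le> (x \<bullet> (S *v x)) * (y \<bullet> (S *v y))"
proof (cases "y = 0")
  case False
  define a where "a = x \<bullet> (S *v y)"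
  define c where "c = y \<bullet> (S *v y)"
  have "0 < c"
    using pos_def_nonneg[OF assms, of y] pos_def_eq_0_iff[OF assms, of y] False by (simp add: c_def)
  have "0 \<le> (x - (a / c) *\<^sub>R y) \<bullet> (S *v (x - (a / c) *\<^sub>R y))"
    by (rule pos_def_nonneg[OF assms])
  also have "\<dots> = x \<bullet> (S *v x) - a\<^sup>2 / c"
    using pos_def_inner_commute[OF assms, of y x] \<open>0 < c\<close>
    by (simp add: matrix_vector_mult_diff_distrib matrix_vector_mult_scaleR inner_diff_left
        inner_diff_right a_def c_def power2_eq_square field_simps)
  finally show ?thesis
    using \<open>0 < c\<close> by (simp add: a_def c_def divide_le_eq)
qed simp

lemma quadratic_form_le_onorm:
  fixes S :: "real^'n^'n"
  shows "x \<bullet> (S *v x) \<le> onorm (\<lambda>x. S *v x) * (norm x)\<^sup>2"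
proof -
  have "x \<bullet> (S *v x) \<le> norm x * norm (S *v x)"
    by (rule norm_cauchy_schwarz)
  also have "\<dots> \<le> norm x * (onorm (\<lambda>x. S *v x) * norm x)"
    by (intro mult_left_mono onorm) auto
  finally show ?thesis
    by (simp add: power2_eq_square mult_ac)
qed

section \<open>The Gaussian discriminant model\<close>

lemma Sig_beta_star:
  assumes "pos_def (Sig u)"
  shows "Sig u *v beta_star Sig mu1 mu2 u = delta mu1 mu2 u"
  unfolding beta_star_def by (rule pos_def_right_inverse[OF assms])

lemma Delta_eq_sqrt:
  assumes "pos_def (Sig u)"
  shows "Delta Sig mu1 mu2 u = sqrt (beta_star Sig mu1 mu2 u \<bullet> (Sig u *v beta_star Sig mu1 mu2 u))"
  unfolding Delta_def beta_star_def[symmetric] Sig_beta_star[of Sig u, OF assms]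
  by (simp add: inner_commute)

lemma Delta_squared:
  assumes "pos_def (Sig u)"
  shows "(Delta Sig mu1 mu2 u)\<^sup>2 = beta_star Sig mu1 mu2 u \<bullet> (Sig u *v beta_star Sig mu1 mu2 u)"
  using Delta_eq_sqrt[of Sig u mu1 mu2, OF assms] pos_def_nonneg[OF assms] by simp

lemma Delta_nonneg:
  assumes "pos_def (Sig u)"
  shows "0 \<le> Delta Sig mu1 mu2 u"
  using Delta_eq_sqrt[of Sig u mu1 mu2, OF assms] pos_def_nonneg[OF assms] by simp

lemma ls_loss_expansion:
  fixes Sig :: "real \<Rightarrow> real^'n^'n" and mu1 mu2 :: "real \<Rightarrow> real^'n" and h :: "real^'n"
  assumes pd: "pos_def (Sig u)"
  defines "b \<equiv> beta_star Sig mu1 mu2 u" and "k \<equiv> 1 / (4 + (Delta Sig mu1 mu2 u)\<^sup>2)"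
  shows "ls_loss Sig mu1 mu2 u (k *\<^sub>R b + h)
    = ls_loss Sig mu1 mu2 u (k *\<^sub>R b) + h \<bullet> (Sig u *v h) + (h \<bullet> delta mu1 mu2 u)\<^sup>2 / 4"
proof -
  define D2 where "D2 = (Delta Sig mu1 mu2 u)\<^sup>2"
  define p where "p = h \<bullet> delta mu1 mu2 u"
  define HS where "HS = h \<bullet> (Sig u *v h)"
  have Sb: "Sig u *v b = delta mu1 mu2 u"
    unfolding b_def by (rule Sig_beta_star[of Sig u, OF pd])
  have bSb: "b \<bullet> (Sig u *v b) = D2" and bd: "b \<bullet> delta mu1 mu2 u = D2"
    using Delta_squared[of Sig u mu1 mu2, OF pd] Sb by (simp_all add: D2_def b_def)
  have bSh: "b \<bullet> (Sig u *v h) = p"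
    using pos_def_inner_commute[OF pd, of b h] Sb by (simp add: p_def)
  have "0 < 4 + D2"
    unfolding D2_def by (simp add: add_pos_nonneg)
  then have k: "k * (4 + D2) = 1"
    unfolding k_def D2_def by simp
  have "(k *\<^sub>R b + h) \<bullet> delta mu1 mu2 u = k * D2 + p"
    by (simp add: inner_add_left bd p_def)
  moreover have "(k *\<^sub>R b + h) \<bullet> (Sig u *v (k *\<^sub>R b + h)) = k\<^sup>2 * D2 + 2 * k * p + HS"
    using pos_def_quadratic_form_add[OF pd, of "k *\<^sub>R b" h]
    by (simp add: matrix_vector_mult_scaleR bSb bSh HS_def power2_eq_square)
  ultimately have "ls_loss Sig mu1 mu2 u (k *\<^sub>R b + h)
      = 1/4 - (k * D2 + p) / 2 + (k\<^sup>2 * D2 + 2 * k * p + HS) + (k * D2 + p)\<^sup>2 / 4"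
    by (simp add: ls_loss_def)
  moreover have "ls_loss Sig mu1 mu2 u (k *\<^sub>R b) = 1/4 - k * D2 / 2 + k\<^sup>2 * D2 + (k * D2)\<^sup>2 / 4"
    by (simp add: ls_loss_def matrix_vector_mult_scaleR bSb bd power2_eq_square)
  moreover have "(1/4 - (k * D2 + p) / 2 + (k\<^sup>2 * D2 + 2 * k * p + HS) + (k * D2 + p)\<^sup>2 / 4)
      - (1/4 - k * D2 / 2 + k\<^sup>2 * D2 + (k * D2)\<^sup>2 / 4 + HS + p\<^sup>2 / 4) = p / 2 * (k * (4 + D2) - 1)"
    by (simp add: power2_eq_square field_simps)
  moreover have "p / 2 * (k * (4 + D2) - 1) = 0"
    using k by simp
  ultimately show ?thesis
    unfolding p_def[symmetric] HS_def[symmetric] by linarith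
qed

lemma theta_star_eq:
  fixes Sig :: "real \<Rightarrow> real^'n^'n" and mu1 mu2 :: "real \<Rightarrow> real^'n"
  assumes pd: "pos_def (Sig u)"
  shows "theta_star Sig mu1 mu2 u
    = (1 / (4 + (Delta Sig mu1 mu2 u)\<^sup>2)) *\<^sub>R beta_star Sig mu1 mu2 u"
    (is "_ = ?\<theta>")
proof -
  have loss: "ls_loss Sig mu1 mu2 u \<theta> = ls_loss Sig mu1 mu2 u ?\<theta>
      + (\<theta> - ?\<theta>) \<bullet> (Sig u *v (\<theta> - ?\<theta>)) + ((\<theta> - ?\<theta>) \<bullet> delta mu1 mu2 u)\<^sup>2 / 4" for \<theta>
    using ls_loss_expansion[of Sig u mu1 mu2 "\<theta> - ?\<theta>", OF pd] by simp
  show ?thesis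
    unfolding theta_star_def
  proof (rule the_equality)
    show "\<forall>\<theta>'. ls_loss Sig mu1 mu2 u ?\<theta> \<le> ls_loss Sig mu1 mu2 u \<theta>'"
    proof
      fix \<theta>'
      show "ls_loss Sig mu1 mu2 u ?\<theta> \<le> ls_loss Sig mu1 mu2 u \<theta>'"
        using loss[of \<theta>'] pos_def_nonneg[OF pd, of "\<theta>' - ?\<theta>"]
          zero_le_power2[of "(\<theta>' - ?\<theta>) \<bullet> delta mu1 mu2 u"] by linarith
    qed
  next
    fix \<theta> assume "\<forall>\<theta>'. ls_loss Sig mu1 mu2 u \<theta> \<le> ls_loss Sig mu1 mu2 u \<theta>'"
    then have "ls_loss Sig mu1 mu2 u \<theta> \<le> ls_loss Sig mu1 mu2 u ?\<theta>"
      by blast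
    then have "(\<theta> - ?\<theta>) \<bullet> (Sig u *v (\<theta> - ?\<theta>)) \<le> 0"
      using loss[of \<theta>] zero_le_power2[of "(\<theta> - ?\<theta>) \<bullet> delta mu1 mu2 u"] by linarith
    then show "\<theta> = ?\<theta>"
      using pos_def_nonneg[OF pd, of "\<theta> - ?\<theta>"] pos_def_eq_0_iff[OF pd, of "\<theta> - ?\<theta>"] by simp
  qed
qed

lemma plugin_risk_eq:
  fixes Sig :: "real \<Rightarrow> real^'n^'n" and mu1 mu2 :: "real \<Rightarrow> real^'n"
    and m \<theta> :: "real^'n" and u :: real
  defines "s \<equiv> sqrt (\<theta> \<bullet> (Sig u *v \<theta>))"
  defines "t \<equiv> (m - mid mu1 mu2 u) \<bullet> \<theta> / s" and "d \<equiv> delta mu1 mu2 u \<bullet> \<theta> / (2 * s)"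
  shows "plugin_risk Sig mu1 mu2 m \<theta> u = 1/2 * Phi (t - d) + 1/2 * Phi (- t - d)"
proof -
  have mu1: "m - mu1 u = (m - mid mu1 mu2 u) - (1/2) *\<^sub>R delta mu1 mu2 u"
    and mu2: "m - mu2 u = (m - mid mu1 mu2 u) + (1/2) *\<^sub>R delta mu1 mu2 u"
    by (simp_all add: mid_def delta_def vec_eq_iff algebra_simps)
  have "(m - mu1 u) \<bullet> \<theta> = (m - mid mu1 mu2 u) \<bullet> \<theta> - delta mu1 mu2 u \<bullet> \<theta> / 2"
    and "(m - mu2 u) \<bullet> \<theta> = (m - mid mu1 mu2 u) \<bullet> \<theta> + delta mu1 mu2 u \<bullet> \<theta> / 2"
    unfolding mu1 mu2 inner_diff_left inner_add_left inner_scaleR_left by simp_all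
  then have "(m - mu1 u) \<bullet> \<theta> / s = t - d" and "(m - mu2 u) \<bullet> \<theta> / s = t + d"
    by (simp_all add: t_def d_def diff_divide_distrib add_divide_distrib)
  then show ?thesis
    by (simp add: plugin_risk_def s_def Phibar_eq_Phi_minus)
qed

section \<open>Perturbation of the plug-in risk\<close>

lemma cross_term_bounds:
  fixes D k q HS :: real
  assumes "0 < k" "q\<^sup>2 \<le> D\<^sup>2 * HS" "HS \<le> k\<^sup>2 * D\<^sup>2 / 16"
  shows "\<bar>q\<bar> \<le> k * D\<^sup>2 / 4" and "- (k\<^sup>2 * D\<^sup>2 / 4) \<le> k * q"
proof -
  have "q\<^sup>2 \<le> D\<^sup>2 * (k\<^sup>2 * D\<^sup>2 / 16)"
    using assms(2,3) by (meson order_trans mult_left_mono zero_le_power2)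
  also have "\<dots> = (k * D\<^sup>2 / 4)\<^sup>2"
    by (simp add: power2_eq_square field_simps)
  finally show q: "\<bar>q\<bar> \<le> k * D\<^sup>2 / 4"
    using assms by (simp add: power2_le_iff_abs_le)
  then have "k * (- (k * D\<^sup>2 / 4)) \<le> k * q"
    using assms by (intro mult_left_mono) auto
  then show "- (k\<^sup>2 * D\<^sup>2 / 4) \<le> k * q"
    by (simp add: power2_eq_square)
qed

text \<open>Scalar form of the Cauchy-Schwarz defect of \<open>b\<close> and \<open>k b + h\<close> in a \<open>\<Sigma>\<close>-inner product,
  with \<open>D\<^sup>2 = b\<Sigma>b\<close>, \<open>q = b\<Sigma>h\<close> and \<open>HS = h\<Sigma>h\<close>: the identity \<open>gram\<close> shows that the defect
  only involves \<open>h\<close>.\<close>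
lemma normalized_gap_bounds:
  fixes D k q HS :: real
  assumes "0 < D" "0 < k" "0 \<le> HS" "q\<^sup>2 \<le> D\<^sup>2 * HS" "HS \<le> k\<^sup>2 * D\<^sup>2 / 16"
  defines "s \<equiv> sqrt (k\<^sup>2 * D\<^sup>2 + 2 * k * q + HS)"
  defines "d \<equiv> (k * D\<^sup>2 + q) / (2 * s)"
  shows "k\<^sup>2 * D\<^sup>2 / 2 \<le> s\<^sup>2" and "0 < s" and "0 \<le> D / 2 - d" and "D / 2 - d \<le> D * HS / (2 * s\<^sup>2)"
proof -
  define p where "p = k * D\<^sup>2 + q"
  have d_eq: "d = p / (2 * s)"
    unfolding d_def p_def ..
  note cross = cross_term_bounds[OF \<open>0 < k\<close> assms(4,5)]
  have "0 < k * D\<^sup>2" "0 < k\<^sup>2 * D\<^sup>2"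
    using assms by simp_all
  then have "0 < p" and arg: "k\<^sup>2 * D\<^sup>2 / 2 \<le> k\<^sup>2 * D\<^sup>2 + 2 * k * q + HS"
    using cross \<open>0 \<le> HS\<close> unfolding p_def by linarith+
  moreover have "0 < k\<^sup>2 * D\<^sup>2 + 2 * k * q + HS"
    using arg \<open>0 < k\<^sup>2 * D\<^sup>2\<close> by linarith
  ultimately have s_sq: "s\<^sup>2 = k\<^sup>2 * D\<^sup>2 + 2 * k * q + HS" and "0 < s"
    unfolding s_def by simp_all
  with arg show "k\<^sup>2 * D\<^sup>2 / 2 \<le> s\<^sup>2" and "0 < s"
    by simp_all
  have gram: "(D * s)\<^sup>2 - p\<^sup>2 = D\<^sup>2 * HS - q\<^sup>2"
    unfolding power_mult_distrib s_sq p_def by (simp add: power2_eq_square algebra_simps)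
  then have "p\<^sup>2 \<le> (D * s)\<^sup>2"
    using assms(4) by linarith
  then have "p \<le> D * s"
    by (rule power2_le_imp_le) (use \<open>0 < D\<close> \<open>0 < s\<close> in simp)
  then show "0 \<le> D / 2 - d"
    using \<open>0 < s\<close> by (simp add: d_eq field_simps)
  have "(D * s - p) * (D * s) \<le> (D * s - p) * (D * s + p)"
    using \<open>p \<le> D * s\<close> \<open>0 < p\<close> by (intro mult_left_mono) auto
  also have "\<dots> = D\<^sup>2 * HS - q\<^sup>2"
    using gram by (simp add: power2_eq_square algebra_simps)
  also have "\<dots> \<le> D\<^sup>2 * HS"
    by simp
  finally have "D * s - p \<le> D * HS / s"
    using assms \<open>0 < s\<close> by (simp add: le_divide_eq power2_eq_square mult_ac)
  then have "(D * s - p) / (2 * s) \<le> (D * HS / s) / (2 * s)"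
    using \<open>0 < s\<close> by (intro divide_right_mono) auto
  then show "D / 2 - d \<le> D * HS / (2 * s\<^sup>2)"
    using \<open>0 < s\<close> by (simp add: d_eq power2_eq_square diff_divide_distrib)
qed

lemma pos_def_direction_gap_bounds:
  fixes S :: "real^'n^'n" and b h :: "real^'n"
  assumes pd: "pos_def S" and "0 < D" "0 < k" "D\<^sup>2 = b \<bullet> (S *v b)"
    and "h \<bullet> (S *v h) \<le> k\<^sup>2 * D\<^sup>2 / 16"
  defines "s \<equiv> sqrt ((k *\<^sub>R b + h) \<bullet> (S *v (k *\<^sub>R b + h)))"
  defines "d \<equiv> (S *v b) \<bullet> (k *\<^sub>R b + h) / (2 * s)"
  shows "k\<^sup>2 * D\<^sup>2 / 2 \<le> s\<^sup>2" and "0 < s" and "0 \<le> D / 2 - d"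
    and "D / 2 - d \<le> D * (h \<bullet> (S *v h)) / (2 * s\<^sup>2)"
proof -
  define q where "q = b \<bullet> (S *v h)"
  have "(k *\<^sub>R b + h) \<bullet> (S *v (k *\<^sub>R b + h)) = k\<^sup>2 * D\<^sup>2 + 2 * k * q + h \<bullet> (S *v h)"
    using pos_def_quadratic_form_add[OF pd, of "k *\<^sub>R b" h] assms(4)
    by (simp add: matrix_vector_mult_scaleR q_def power2_eq_square)
  moreover have "(S *v b) \<bullet> (k *\<^sub>R b + h) = k * D\<^sup>2 + q"
  proof -
    have "(S *v b) \<bullet> h = q"
      using pos_def_inner_commute[OF pd, of h b] by (simp add: q_def inner_commute)
    moreover have "(S *v b) \<bullet> b = D\<^sup>2"
      using assms(4) by (simp add: inner_commute)
    ultimately show ?thesis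
      by (simp add: inner_add_right)
  qed
  moreover have "q\<^sup>2 \<le> D\<^sup>2 * (h \<bullet> (S *v h))"
    using pos_def_Cauchy_Schwarz[OF pd, of b h] assms(4) by (simp add: q_def)
  ultimately show "k\<^sup>2 * D\<^sup>2 / 2 \<le> s\<^sup>2" and "0 < s" and "0 \<le> D / 2 - d"
    and "D / 2 - d \<le> D * (h \<bullet> (S *v h)) / (2 * s\<^sup>2)"
    using normalized_gap_bounds[of D k "h \<bullet> (S *v h)" q] assms pos_def_nonneg[OF pd, of h]
    by (simp_all add: s_def d_def)
qed

lemma normalized_gap_consequences:
  fixes D k s d HS :: real
  assumes "0 < D" "0 < k" "0 < s" "HS \<le> k\<^sup>2 * D\<^sup>2 / 16" "k\<^sup>2 * D\<^sup>2 / 2 \<le> s\<^sup>2"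
    and "D / 2 - d \<le> D * HS / (2 * s\<^sup>2)"
  shows "D / 4 \<le> d" and "k * D / 2 \<le> s"
proof -
  have "D * HS / (2 * s\<^sup>2) \<le> D * (s\<^sup>2 / 8) / (2 * s\<^sup>2)"
    using assms(1,4,5) by (intro divide_right_mono mult_left_mono) auto
  also have "\<dots> = D / 16"
    using \<open>0 < s\<close> by simp
  finally show "D / 4 \<le> d"
    using assms(1,6) by linarith
  have "(k * D / 2)\<^sup>2 = k\<^sup>2 * D\<^sup>2 / 4" "0 \<le> k\<^sup>2 * D\<^sup>2"
    by (simp_all add: power_mult_distrib power_divide)
  then have "(k * D / 2)\<^sup>2 \<le> s\<^sup>2"
    using assms(5) by linarith
  then show "k * D / 2 \<le> s"
    by (rule power2_le_imp_le) (use \<open>0 < s\<close> in simp)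
qed

lemma inner_perturbation_bounds:
  fixes w b h :: "'a::real_inner"
  assumes "0 \<le> k" "norm h \<le> 1" "norm w \<le> 1"
  shows "\<bar>w \<bullet> (k *\<^sub>R b + h)\<bar> \<le> norm w * (k * norm b + 1)"
    and "(w \<bullet> (k *\<^sub>R b + h))\<^sup>2 \<le> 2 * (k\<^sup>2 * (w \<bullet> b)\<^sup>2 + (norm h)\<^sup>2)"
proof -
  have wh: "\<bar>w \<bullet> h\<bar> \<le> norm h"
    using Cauchy_Schwarz_ineq2[of w h]
      mult_left_le_one_le[OF norm_ge_zero[of h] norm_ge_zero[of w] assms(3)]
    by linarith
  have "\<bar>w \<bullet> (k *\<^sub>R b + h)\<bar> \<le> k * \<bar>w \<bullet> b\<bar> + \<bar>w \<bullet> h\<bar>"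
    using assms by (simp add: inner_add_right abs_mult abs_triangle_ineq[THEN order_trans])
  also have "\<dots> \<le> k * (norm w * norm b) + norm w * norm h"
    using assms by (intro add_mono mult_left_mono Cauchy_Schwarz_ineq2) auto
  also have "\<dots> \<le> norm w * (k * norm b + 1)"
    using mult_left_le_one_le[OF norm_ge_zero[of w] norm_ge_zero[of h] assms(2)]
    by (simp add: algebra_simps)
  finally show "\<bar>w \<bullet> (k *\<^sub>R b + h)\<bar> \<le> norm w * (k * norm b + 1)" .
  have "(w \<bullet> (k *\<^sub>R b + h))\<^sup>2 \<le> 2 * ((k * (w \<bullet> b))\<^sup>2 + (w \<bullet> h)\<^sup>2)"
    using power2_sum[of "k * (w \<bullet> b)" "w \<bullet> h"] power2_diff[of "k * (w \<bullet> b)" "w \<bullet> h"]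
      zero_le_power2[of "k * (w \<bullet> b) - w \<bullet> h"]
    by (simp add: inner_add_right)
  also have "\<dots> \<le> 2 * (k\<^sup>2 * (w \<bullet> b)\<^sup>2 + (norm h)\<^sup>2)"
    using wh by (simp add: power_mult_distrib power2_le_iff_abs_le)
  finally show "(w \<bullet> (k *\<^sub>R b + h))\<^sup>2 \<le> 2 * (k\<^sup>2 * (w \<bullet> b)\<^sup>2 + (norm h)\<^sup>2)" .
qed

lemma normalized_offset_bounds:
  fixes w b h :: "'a::real_inner"
  assumes "0 < k" "0 < D" "k * D / 2 \<le> s" "norm h \<le> 1" "norm w \<le> 1"
    and "norm w * (k * norm b + 1) \<le> k * D\<^sup>2 / 16"
  defines "t \<equiv> w \<bullet> (k *\<^sub>R b + h) / s"
  shows "\<bar>t\<bar> \<le> D / 8" and "t\<^sup>2 \<le> 2 * (k\<^sup>2 * (w \<bullet> b)\<^sup>2 + (norm h)\<^sup>2) / s\<^sup>2"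
proof -
  have "0 < k * D / 2"
    using assms(1,2) by simp
  then have "0 < s"
    using assms(3) by linarith
  have "\<bar>t\<bar> \<le> (k * D\<^sup>2 / 16) / (k * D / 2)"
    unfolding t_def abs_divide using inner_perturbation_bounds(1)[of k h w b] assms \<open>0 < s\<close>
    by (intro frac_le) auto
  then show "\<bar>t\<bar> \<le> D / 8"
    using assms(1,2) by (simp add: power2_eq_square)
  show "t\<^sup>2 \<le> 2 * (k\<^sup>2 * (w \<bullet> b)\<^sup>2 + (norm h)\<^sup>2) / s\<^sup>2"
    unfolding t_def power_divide using inner_perturbation_bounds(2)[of k h w b] assms
    by (simp add: divide_right_mono)
qed

lemma risk_terms_bounds:
  fixes D M H HS e s t g :: real
  defines "k \<equiv> 1 / (4 + D\<^sup>2)"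
  assumes "0 < D" "0 \<le> M" "0 \<le> H" "HS \<le> M * H"
    and "k\<^sup>2 * D\<^sup>2 / 2 \<le> s\<^sup>2" "t\<^sup>2 \<le> 2 * (k\<^sup>2 * e\<^sup>2 + H) / s\<^sup>2" "g \<le> D * HS / (2 * s\<^sup>2)"
  shows "3/4 * D * t\<^sup>2 + g \<le> (3 * e\<^sup>2 + (3 + M) * (4 + D\<^sup>2)\<^sup>2 * H) / D"
proof -
  define Q where "Q = (4 + D\<^sup>2)\<^sup>2"
  have "0 < 4 + D\<^sup>2"
    by (simp add: add_pos_nonneg)
  then have "0 < Q" and k_sq: "k\<^sup>2 = 1 / Q"
    by (simp_all add: Q_def k_def power_one_over)
  have "0 < D\<^sup>2 / (2 * Q)" "D\<^sup>2 / (2 * Q) \<le> s\<^sup>2"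
    using assms(2,6) \<open>0 < Q\<close> by (simp_all add: k_sq)
  then have "inverse (s\<^sup>2) \<le> inverse (D\<^sup>2 / (2 * Q))"
    by (rule le_imp_inverse_le[rotated])
  then have r: "1 / s\<^sup>2 \<le> 2 * Q / D\<^sup>2"
    by (simp add: inverse_eq_divide)
  have "t\<^sup>2 \<le> 2 * (k\<^sup>2 * e\<^sup>2 + H) * (1 / s\<^sup>2)"
    using assms(7) by simp
  also have "\<dots> \<le> 2 * (k\<^sup>2 * e\<^sup>2 + H) * (2 * Q / D\<^sup>2)"
    using r assms(4) by (intro mult_left_mono) auto
  also have "\<dots> = 4 * (e\<^sup>2 + Q * H) / D\<^sup>2"
    using \<open>0 < Q\<close> \<open>0 < D\<close> by (simp add: k_sq field_simps)
  finally have "3/4 * D * t\<^sup>2 \<le> 3/4 * D * (4 * (e\<^sup>2 + Q * H) / D\<^sup>2)"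
    using \<open>0 < D\<close> by (intro mult_left_mono) auto
  also have "\<dots> = 3 * (e\<^sup>2 + Q * H) / D"
    using \<open>0 < D\<close> by (simp add: power2_eq_square field_simps)
  finally have t: "3/4 * D * t\<^sup>2 \<le> 3 * (e\<^sup>2 + Q * H) / D" .
  have "g \<le> D * HS / 2 * (1 / s\<^sup>2)"
    using assms(8) by simp
  also have "\<dots> \<le> D * (M * H) / 2 * (1 / s\<^sup>2)"
    using assms(2,5) by (intro mult_right_mono divide_right_mono mult_left_mono) auto
  also have "\<dots> \<le> D * (M * H) / 2 * (2 * Q / D\<^sup>2)"
    using r assms by (intro mult_left_mono) auto
  also have "\<dots> = M * Q * H / D"
    using \<open>0 < D\<close> by (simp add: power2_eq_square field_simps)
  finally have "g \<le> M * Q * H / D" .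
  moreover have "(3 * e\<^sup>2 + (3 + M) * Q * H) / D = 3 * (e\<^sup>2 + Q * H) / D + M * Q * H / D"
    by (simp add: add_divide_distrib algebra_simps)
  ultimately show ?thesis
    using t unfolding Q_def[symmetric] by linarith
qed

lemma risk_deviation_constant_bound:
  fixes D M H e :: real
  assumes "0 < D" "1 \<le> M" "0 \<le> H"
  shows "phi (D / 8) * ((3 * e\<^sup>2 + (3 + M) * (4 + D\<^sup>2)\<^sup>2 * H) / D) \<le> 2 ^ 18 * M / D * (H + e\<^sup>2)"
proof -
  define P where "P = phi (D / 8)"
  have "0 \<le> P" "P \<le> 1" "P * (4 + D\<^sup>2)\<^sup>2 \<le> 2 ^ 16"
    unfolding P_def using std_normal_density_le_1 std_normal_density_decay
    by (simp_all add: mult.commute)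
  then have "3 * P * e\<^sup>2 + (3 + M) * (P * (4 + D\<^sup>2)\<^sup>2) * H \<le> 3 * e\<^sup>2 + (3 + M) * 2 ^ 16 * H"
    using assms by (intro add_mono mult_right_mono mult_left_mono) auto
  moreover have "1 * e\<^sup>2 \<le> M * e\<^sup>2" "1 * H \<le> M * H"
    using assms by (intro mult_right_mono; simp)+
  moreover have "(3 + M) * 2 ^ 16 * H = 196608 * H + 65536 * (M * H)"
    and "2 ^ 18 * M * (H + e\<^sup>2) = 262144 * (M * H) + 262144 * (M * e\<^sup>2)"
    by (simp_all add: algebra_simps)
  moreover have "0 \<le> e\<^sup>2"
    by simp
  ultimately have "3 * P * e\<^sup>2 + (3 + M) * (P * (4 + D\<^sup>2)\<^sup>2) * H \<le> 2 ^ 18 * M * (H + e\<^sup>2)"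
    by linarith
  then show ?thesis
    using \<open>0 < D\<close> by (simp add: P_def divide_right_mono algebra_simps)
qed

lemma plugin_risk_deviation_bound:
  fixes Sig :: "real \<Rightarrow> real^'n^'n" and mu1 mu2 :: "real \<Rightarrow> real^'n"
    and m \<theta> :: "real^'n" and u :: real
  defines "\<Delta> \<equiv> Delta Sig mu1 mu2 u" and "b \<equiv> beta_star Sig mu1 mu2 u"
    and "h \<equiv> \<theta> - theta_star Sig mu1 mu2 u" and "w \<equiv> m - mid mu1 mu2 u"
  defines "k \<equiv> 1 / (4 + \<Delta>\<^sup>2)"
  assumes pd: "pos_def (Sig u)" and "0 < \<Delta>" and "1 \<le> M" and M: "onorm (\<lambda>x. Sig u *v x) \<le> M"
    and h: "norm h \<le> 1" "M * norm h \<le> k\<^sup>2 * \<Delta>\<^sup>2 / 16"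
    and w: "norm w \<le> 1" "norm w * (k * norm b + 1) \<le> k * \<Delta>\<^sup>2 / 16"
  shows "\<bar>plugin_risk Sig mu1 mu2 m \<theta> u - oracle_risk Sig mu1 mu2 u\<bar>
    \<le> 2 ^ 18 * M / \<Delta> * ((norm h)\<^sup>2 + (w \<bullet> b)\<^sup>2)"
proof -
  define HS where "HS = h \<bullet> (Sig u *v h)"
  define s where "s = sqrt (\<theta> \<bullet> (Sig u *v \<theta>))"
  define t where "t = w \<bullet> \<theta> / s"
  define d where "d = delta mu1 mu2 u \<bullet> \<theta> / (2 * s)"
  have Sb: "Sig u *v b = delta mu1 mu2 u"
    unfolding b_def by (rule Sig_beta_star[of Sig u, OF pd])
  have \<theta>: "\<theta> = k *\<^sub>R b + h"
    using theta_star_eq[of Sig u mu1 mu2, OF pd] by (simp add: h_def k_def b_def \<Delta>_def)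
  have "0 < k"
    unfolding k_def by (simp add: add_pos_nonneg)
  have HS_le: "HS \<le> M * (norm h)\<^sup>2"
    using quadratic_form_le_onorm[of h "Sig u"] M unfolding HS_def
    by (meson order_trans mult_right_mono zero_le_power2)
  also have "\<dots> \<le> M * norm h"
    using h(1) \<open>1 \<le> M\<close> by (simp add: power2_eq_square mult_left_le_one_le)
  finally have "HS \<le> k\<^sup>2 * \<Delta>\<^sup>2 / 16"
    using h(2) by simp
  moreover have "\<Delta>\<^sup>2 = b \<bullet> (Sig u *v b)"
    unfolding \<Delta>_def b_def by (rule Delta_squared[of Sig u, OF pd])
  ultimately have gap: "k\<^sup>2 * \<Delta>\<^sup>2 / 2 \<le> s\<^sup>2" "0 < s" "0 \<le> \<Delta> / 2 - d" "\<Delta> / 2 - d \<le> \<Delta> * HS / (2 * s\<^sup>2)"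
    using pos_def_direction_gap_bounds[OF pd \<open>0 < \<Delta>\<close> \<open>0 < k\<close>, of b h]
    unfolding \<theta>[symmetric] Sb HS_def[symmetric] s_def[symmetric] d_def[symmetric] by auto
  have "\<Delta> / 4 \<le> d" "k * \<Delta> / 2 \<le> s"
    using normalized_gap_consequences[OF \<open>0 < \<Delta>\<close> \<open>0 < k\<close> gap(2) \<open>HS \<le> k\<^sup>2 * \<Delta>\<^sup>2 / 16\<close> gap(1,4)]
    by simp_all
  have t: "\<bar>t\<bar> \<le> \<Delta> / 8" "t\<^sup>2 \<le> 2 * (k\<^sup>2 * (w \<bullet> b)\<^sup>2 + (norm h)\<^sup>2) / s\<^sup>2"
    using normalized_offset_bounds[OF \<open>0 < k\<close> \<open>0 < \<Delta>\<close> \<open>k * \<Delta> / 2 \<le> s\<close> h(1) w]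
    unfolding t_def \<theta> by auto
  have "plugin_risk Sig mu1 mu2 m \<theta> u = 1/2 * Phi (t - d) + 1/2 * Phi (- t - d)"
    unfolding t_def d_def s_def w_def by (rule plugin_risk_eq)
  moreover have "oracle_risk Sig mu1 mu2 u = Phi (- \<Delta> / 2)"
    by (simp add: oracle_risk_def \<Delta>_def)
  ultimately have "\<bar>plugin_risk Sig mu1 mu2 m \<theta> u - oracle_risk Sig mu1 mu2 u\<bar>
      \<le> phi (\<Delta> / 8) * (3/4 * \<Delta> * t\<^sup>2 + (\<Delta> / 2 - d))"
    using Phi_risk_deviation_bound[OF \<open>0 < \<Delta>\<close> \<open>\<Delta> / 4 \<le> d\<close> _ t(1)] gap(3) by simp
  also have "\<dots> \<le> phi (\<Delta> / 8) * ((3 * (w \<bullet> b)\<^sup>2 + (3 + M) * (4 + \<Delta>\<^sup>2)\<^sup>2 * (norm h)\<^sup>2) / \<Delta>)"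
    using risk_terms_bounds[of \<Delta> M "(norm h)\<^sup>2" HS s t "w \<bullet> b" "\<Delta> / 2 - d"]
      \<open>0 < \<Delta>\<close> \<open>1 \<le> M\<close> HS_le gap(1,4) t(2)
    unfolding k_def by (intro mult_left_mono) auto
  also have "\<dots> \<le> 2 ^ 18 * M / \<Delta> * ((norm h)\<^sup>2 + (w \<bullet> b)\<^sup>2)"
    using risk_deviation_constant_bound[OF \<open>0 < \<Delta>\<close> \<open>1 \<le> M\<close>] by simp
  finally show ?thesis .
qed

lemma eventually_plugin_risk_deviation_le:
  fixes Sig :: "real \<Rightarrow> real^'n^'n" and mu1 mu2 :: "real \<Rightarrow> real^'n"
    and mhat \<theta>hat :: "nat \<Rightarrow> real^'n"
  assumes pd: "pos_def (Sig u)" and "0 < D0" "D0 \<le> Delta Sig mu1 mu2 u"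
    and "1 \<le> M" "onorm (\<lambda>x. Sig u *v x) \<le> M"
    and \<theta>hat: "(\<lambda>n. norm (\<theta>hat n - theta_star Sig mu1 mu2 u)) \<longlonglongrightarrow> 0"
    and mhat: "(\<lambda>n. norm (mhat n - mid mu1 mu2 u)) \<longlonglongrightarrow> 0"
  shows "\<forall>\<^sub>F n in sequentially.
    \<bar>plugin_risk Sig mu1 mu2 (mhat n) (\<theta>hat n) u - oracle_risk Sig mu1 mu2 u\<bar>
      \<le> 2 ^ 18 * M / D0 * ((norm (\<theta>hat n - theta_star Sig mu1 mu2 u))^2
           + \<bar>(mhat n - mid mu1 mu2 u) \<bullet> beta_star Sig mu1 mu2 u\<bar>^2)"
proof -
  define \<Delta> where "\<Delta> = Delta Sig mu1 mu2 u"
  define k where "k = 1 / (4 + \<Delta>\<^sup>2)"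
  define c where "c = k * norm (beta_star Sig mu1 mu2 u) + 1"
  have "0 < \<Delta>" "0 < k"
    using assms(2,3) by (simp_all add: \<Delta>_def k_def add_pos_nonneg)
  then have "0 < k\<^sup>2 * \<Delta>\<^sup>2 / 16" "0 < k * \<Delta>\<^sup>2 / 16"
    by simp_all
  then have "\<forall>\<^sub>F n in sequentially. norm (\<theta>hat n - theta_star Sig mu1 mu2 u) < 1"
    and "\<forall>\<^sub>F n in sequentially. M * norm (\<theta>hat n - theta_star Sig mu1 mu2 u) < k\<^sup>2 * \<Delta>\<^sup>2 / 16"
    and "\<forall>\<^sub>F n in sequentially. norm (mhat n - mid mu1 mu2 u) < 1"
    and "\<forall>\<^sub>F n in sequentially. norm (mhat n - mid mu1 mu2 u) * c < k * \<Delta>\<^sup>2 / 16"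
    by (auto intro!: order_tendstoD(2) \<theta>hat mhat tendsto_mult_right_zero tendsto_mult_left_zero)
  then show ?thesis
  proof eventually_elim
    case (elim n)
    then have "\<bar>plugin_risk Sig mu1 mu2 (mhat n) (\<theta>hat n) u - oracle_risk Sig mu1 mu2 u\<bar>
        \<le> 2 ^ 18 * M / \<Delta> * ((norm (\<theta>hat n - theta_star Sig mu1 mu2 u))\<^sup>2
          + ((mhat n - mid mu1 mu2 u) \<bullet> beta_star Sig mu1 mu2 u)\<^sup>2)"
      unfolding \<Delta>_def using assms(4,5) \<open>0 < \<Delta>\<close>
      by (intro plugin_risk_deviation_bound pd) (auto simp: \<Delta>_def k_def c_def)
    also have "\<dots> \<le> 2 ^ 18 * M / D0 * ((norm (\<theta>hat n - theta_star Sig mu1 mu2 u))\<^sup>2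
          + ((mhat n - mid mu1 mu2 u) \<bullet> beta_star Sig mu1 mu2 u)\<^sup>2)"
      using assms(2-4) by (intro mult_right_mono divide_left_mono) (auto simp: \<Delta>_def)
    finally show ?case
      by simp
  qed
qed

lemma tendsto_norm_midpoint_error:
  assumes "(\<lambda>n. norm (x1 n - mu1 u)) \<longlonglongrightarrow> 0" and "(\<lambda>n. norm (x2 n - mu2 u)) \<longlonglongrightarrow> 0"
  shows "(\<lambda>n. norm ((1/2) *\<^sub>R (x1 n + x2 n) - mid mu1 mu2 u)) \<longlonglongrightarrow> 0"
proof -
  have "(\<lambda>n. (1/2) *\<^sub>R (x1 n - mu1 u) + (1/2) *\<^sub>R (x2 n - mu2 u)) \<longlonglongrightarrow> (1/2) *\<^sub>R 0 + (1/2) *\<^sub>R 0"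
    using assms by (intro tendsto_intros) (simp_all add: tendsto_norm_zero_iff)
  moreover have "(1/2) *\<^sub>R (x1 n - mu1 u) + (1/2) *\<^sub>R (x2 n - mu2 u)
      = (1/2) *\<^sub>R (x1 n + x2 n) - mid mu1 mu2 u" for n
    by (simp add: mid_def algebra_simps)
  ultimately show ?thesis
    by (simp add: tendsto_norm_zero)
qed

theorem proposition1:
  fixes mu1 mu2 :: "real \<Rightarrow> real^'p"
    and Sig :: "real \<Rightarrow> real^'p^'p"
    and muhat1 muhat2 thetahat :: "nat \<Rightarrow> real \<Rightarrow> real^'p"
  assumes "bdd_above ((\<lambda>u. onorm (\<lambda>x. Sig u *v x)) ` {0..1})"
    and "\<forall>u\<in>{0..1}. pos_def (Sig u)"
    and "(INF u\<in>{0..1}. Delta Sig mu1 mu2 u) > 0"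
    and "\<forall>u\<in>{0..1}. (\<lambda>n. norm (muhat1 n u - mu1 u)) \<longlonglongrightarrow> 0"
    and "\<forall>u\<in>{0..1}. (\<lambda>n. norm (muhat2 n u - mu2 u)) \<longlonglongrightarrow> 0"
    and "\<forall>u\<in>{0..1}. (\<lambda>n. norm (thetahat n u - theta_star Sig mu1 mu2 u)) \<longlonglongrightarrow> 0"
  shows "\<exists>C. \<forall>u\<in>{0..1}. \<forall>\<^sub>F n in sequentially.
           \<bar>plugin_risk Sig mu1 mu2 ((1/2) *\<^sub>R (muhat1 n u + muhat2 n u)) (thetahat n u) u
              - oracle_risk Sig mu1 mu2 u\<bar>
           \<le> C * ((norm (thetahat n u - theta_star Sig mu1 mu2 u))^2
                  + \<bar>((1/2) *\<^sub>R (muhat1 n u + muhat2 n u) - mid mu1 mu2 u) \<bullet> beta_star Sig mu1 mu2 u\<bar>^2)"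
proof -
  obtain B where B: "\<And>u. u \<in> {0..1} \<Longrightarrow> onorm (\<lambda>x. Sig u *v x) \<le> B"
    using assms(1) unfolding bdd_above_def by (metis image_eqI)
  define D0 where "D0 = (INF u\<in>{0..1}. Delta Sig mu1 mu2 u)"
  show ?thesis
  proof (intro exI ballI)
    fix u :: real
    assume u: "u \<in> {0..1}"
    have "D0 \<le> Delta Sig mu1 mu2 u"
      unfolding D0_def
      by (rule cINF_lower[OF bdd_belowI2[of _ 0] u]) (use assms(2) Delta_nonneg[of Sig] in blast)
    then show "\<forall>\<^sub>F n in sequentially.
        \<bar>plugin_risk Sig mu1 mu2 ((1/2) *\<^sub>R (muhat1 n u + muhat2 n u)) (thetahat n u) u
          - oracle_risk Sig mu1 mu2 u\<bar>
        \<le> 2 ^ 18 * max 1 B / D0 * ((norm (thetahat n u - theta_star Sig mu1 mu2 u))^2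
          + \<bar>((1/2) *\<^sub>R (muhat1 n u + muhat2 n u) - mid mu1 mu2 u) \<bullet> beta_star Sig mu1 mu2 u\<bar>^2)"
      using assms(2,3) B[OF u] u
      by (intro eventually_plugin_risk_deviation_le assms(6)[rule_format]
          tendsto_norm_midpoint_error[of "\<lambda>n. muhat1 n u" mu1 u "\<lambda>n. muhat2 n u" mu2]
          assms(4,5)[rule_format]) (auto simp: D0_def)
  qed
qed

end
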